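(* Assume $\mathbb{E}\bigl(|h(\theta)|\bigr)<\infty$ and that $S$ satisfies Assumption A at $s^*$. Then, for $f_S$-almost all $s^*\in\mathbb{R}^q$, $$\mathrm{bias}(Y^{(\delta)}_n)=C(s^* )\,\delta^2+O(\delta^3)\quad\text{as }\delta\downarrow0,$$ where $C(s^* )=\dfrac{\Delta\phi_h(s^* )-y\,\Delta\phi_1(s^* )}{2(q+2)\,\phi_1(s^* )}$ and $\Delta$ is the Laplace operator.
   Context: Let $p,q\ge1$, $h\colon\mathbb{R}^p\to\mathbb{R}$ measurable. Let $(\theta,S)$ be a random vector in $\mathbb{R}^p\times\mathbb{R}^q$ with joint Lebesgue density $f_{S,\theta}(s,t)$, marginal $f_S(s)=\int f_{S,\theta}(s,t)\,dt$, and conditional density $f_{\theta|S}(t\mid s)=f_{S,\theta}(s,t)/f_S(s)$ if $f_S(s)>0$, $0$ otherwise; $y=\mathbb{E}(h(\theta)\mid S=s^* )$ computed with this density. ABC algorithm: given $s^*$, $\delta>0$, $n\in\mathbb{N}$, repeatedly draw independent pairs $(\theta,S)$ from the joint distribution, accepting $\theta$ whenever $\|S-s^*\|\le\delta$ (Euclidean norm), until $n$ values $\theta^{(\delta)}_1,\dots,\theta^{(\delta)}_n$ are accepted; $Y^{(\delta)}_n=\frac1n\sum_{j=1}^n h(\theta^{(\delta)}_j)$ and $\mathrm{bias}(Y^{(\delta)}_n)=\mathbb{E}(Y^{(\delta)}_n)-y$. Define $\phi_h(s)=\int_{\mathbb{R}^p}h(t)f_{S,\theta}(s,t)\,dt$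 and $\phi_1=f_S$. Assumption A: $f_S$ and $\phi_h$ are three times continuously differentiable in a neighbourhood of $s^*$. *)

theory Defs
  imports "HOL-Probability.Probability" "HOL-Library.Landau_Symbols"
begin

text \<open>Iterated partial derivatives along a list of directions (applied right to left):
  pd f [v1,...,vk] = partial_{v1} ... partial_{vk} f.\<close>
fun pd :: "('b::euclidean_space \<Rightarrow> real) \<Rightarrow> 'b list \<Rightarrow> 'b \<Rightarrow> real" where
  "pd f [] = f"
| "pd f (v # vs) = (\<lambda>x. deriv (\<lambda>t. pd f vs (x + t *\<^sub>R v)) 0)"

definition Ck_on :: "nat \<Rightarrow> ('b::euclidean_space \<Rightarrow> real) \<Rightarrow> 'b set \<Rightarrow> bool" where
  "Ck_on k f U \<longleftrightarrow>
     (\<forall>vs. set vs \<subseteq> Basis \<and> length vs \<le> k \<longrightarrow>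
        continuous_on U (pd f vs) \<and>
        (length vs < k \<longrightarrow>
           (\<forall>v\<in>Basis. \<forall>x\<in>U. (\<lambda>t. pd f vs (x + t *\<^sub>R v)) differentiable (at 0))))"

definition C3_near :: "('b::euclidean_space \<Rightarrow> real) \<Rightarrow> 'b \<Rightarrow> bool" where
  "C3_near f x \<longleftrightarrow> (\<exists>U. open U \<and> x \<in> U \<and> Ck_on 3 f U)"

definition laplacian :: "('b::euclidean_space \<Rightarrow> real) \<Rightarrow> 'b \<Rightarrow> real" where
  "laplacian f x = (\<Sum>b\<in>Basis. pd f [b, b] x)"

text \<open>Joint law of (S, theta) with joint density f s t.\<close>
definition joint :: "('b::euclidean_space \<Rightarrow> 'a::euclidean_space \<Rightarrow> real) \<Rightarrow> ('b \<times> 'a) measure" where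
  "joint f = density lborel (\<lambda>(s, t). ennreal (f s t))"

definition marg_S :: "('b::euclidean_space \<Rightarrow> 'a::euclidean_space \<Rightarrow> real) \<Rightarrow> 'b \<Rightarrow> real" where
  "marg_S f s = (LINT t|lborel. f s t)"

definition phi :: "('b::euclidean_space \<Rightarrow> 'a::euclidean_space \<Rightarrow> real) \<Rightarrow> ('a \<Rightarrow> real) \<Rightarrow> 'b \<Rightarrow> real" where
  "phi f h s = (LINT t|lborel. h t * f s t)"

definition cond_dens :: "('b::euclidean_space \<Rightarrow> 'a::euclidean_space \<Rightarrow> real) \<Rightarrow> 'a \<Rightarrow> 'b \<Rightarrow> real" where
  "cond_dens f t s = (if marg_S f s > 0 then f s t / marg_S f s else 0)"

definition post_mean :: "('b::euclidean_space \<Rightarrow> 'a::euclidean_space \<Rightarrow> real) \<Rightarrow> ('a \<Rightarrow> real) \<Rightarrow> 'b \<Rightarrow> real" where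
  "post_mean f h s = (LINT t|lborel. h t * cond_dens f t s)"

text \<open>Law of one accepted value theta in the rejection ABC algorithm:
  the law of theta under the joint law conditioned on the acceptance event
  ||S - s*|| \<le> delta.\<close>
definition abc_accepted :: "('b::euclidean_space \<Rightarrow> 'a::euclidean_space \<Rightarrow> real) \<Rightarrow> 'b \<Rightarrow> real \<Rightarrow> 'a measure" where
  "abc_accepted f s\<^sub>0 \<delta> =
     distr (uniform_measure (joint f) {(s, t). norm (s - s\<^sub>0) \<le> \<delta>}) lborel snd"

text \<open>E(Y_n^(delta)): the n accepted values are i.i.d. with law abc_accepted.\<close>
definition abc_expect :: "('b::euclidean_space \<Rightarrow> 'a::euclidean_space \<Rightarrow> real) \<Rightarrow> ('a \<Rightarrow> real) \<Rightarrow> 'b \<Rightarrow> real \<Rightarrow> nat \<Rightarrow> real" where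
  "abc_expect f h s\<^sub>0 \<delta> n =
     (\<integral>x. (1 / real n) * (\<Sum>j<n. h (x j)) \<partial>(PiM {..<n} (\<lambda>_. abc_accepted f s\<^sub>0 \<delta>)))"

definition abc_bias :: "('b::euclidean_space \<Rightarrow> 'a::euclidean_space \<Rightarrow> real) \<Rightarrow> ('a \<Rightarrow> real) \<Rightarrow> 'b \<Rightarrow> real \<Rightarrow> nat \<Rightarrow> real" where
  "abc_bias f h s\<^sub>0 \<delta> n = abc_expect f h s\<^sub>0 \<delta> n - post_mean f h s\<^sub>0"

end

theory Submission
  imports Defs
begin

text \<open>
  The accepted parameters are i.i.d.\ with the law of \<open>\<theta>\<close> given \<open>\<parallel>S - s\<^sub>0\<parallel> \<le> \<delta>\<close>, so the
  mean of the ABC estimator is the quotient of the averages of \<open>\<phi>\<^sub>h\<close> and \<open>f\<^sub>S\<close> over the ball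
  \<open>B(s\<^sub>0, \<delta>)\<close>. Averaging the second-order Taylor polynomial of a \<open>C\<^sup>3\<close> function \<open>g\<close> over
  the ball kills the linear and mixed quadratic terms by reflection symmetry, while each
  \<open>x\<^sub>b\<^sup>2\<close> averages to \<open>\<delta>\<^sup>2 / (q + 2)\<close>; hence the average of \<open>g\<close> is
  \<open>g s\<^sub>0 + \<Delta>g s\<^sub>0 \<delta>\<^sup>2 / (2 (q + 2)) + O(\<delta>\<^sup>3)\<close>. Expanding the quotient of the two
  averages gives the bias; the exceptional null set is \<open>{f\<^sub>S = 0}\<close>.
\<close>

section \<open>Continuous partial derivatives and Taylor's formula\<close>

lemma continuous_partial_increment:
  fixes u D :: "'b::euclidean_space \<Rightarrow> real"
  assumes "open U" "y \<in> U" "e > 0"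
    and der: "\<And>z. z \<in> U \<Longrightarrow> ((\<lambda>t. u (z + t *\<^sub>R c)) has_real_derivative D z) (at 0)"
    and cont: "continuous_on U D"
  obtains d where "d > 0"
    "\<And>z \<tau>. z \<in> ball y d \<Longrightarrow> z + \<tau> *\<^sub>R c \<in> ball y d \<Longrightarrow>
       \<bar>u (z + \<tau> *\<^sub>R c) - u z - \<tau> * D y\<bar> \<le> e * \<bar>\<tau>\<bar>"
proof -
  have "isCont D y" using cont assms(1,2) by (simp add: continuous_on_eq_continuous_at)
  then obtain d1 where "d1 > 0" and d1: "\<And>z. dist z y < d1 \<Longrightarrow> dist (D z) (D y) < e"
    using \<open>e > 0\<close> unfolding continuous_at_eps_delta by blast
  obtain d2 where "d2 > 0" "ball y d2 \<subseteq> U" using assms(1,2) open_contains_ball by blast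
  define d where "d = min d1 d2"
  show ?thesis
  proof (rule that[of d])
    show "d > 0" using \<open>d1 > 0\<close> \<open>d2 > 0\<close> by (simp add: d_def)
    fix z \<tau> assume z: "z \<in> ball y d" and z\<tau>: "z + \<tau> *\<^sub>R c \<in> ball y d"
    have seg: "z + t *\<^sub>R c \<in> ball y d" if "t \<in> closed_segment 0 \<tau>" for t
    proof -
      have "z + t *\<^sub>R c \<in> closed_segment z (z + \<tau> *\<^sub>R c)"
        using that by (auto simp: closed_segment_def algebra_simps)
      then show ?thesis using convex_ball convex_contains_segment z z\<tau> by blast
    qed
    let ?f = "\<lambda>t. u (z + t *\<^sub>R c) - t * D y"
    have "norm (?f \<tau> - ?f 0) \<le> e * norm (\<tau> - 0)"
    proof (rule field_differentiable_bound[OF convex_closed_segment])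
      fix t assume t: "t \<in> closed_segment 0 \<tau>"
      have zt: "z + t *\<^sub>R c \<in> U" using seg[OF t] \<open>ball y d2 \<subseteq> U\<close> by (auto simp: d_def)
      have "((\<lambda>s. u (z + t *\<^sub>R c + s *\<^sub>R c)) has_real_derivative D (z + t *\<^sub>R c)) (at 0)"
        by (rule der[OF zt])
      then have "((\<lambda>s. u (z + (s + t) *\<^sub>R c)) has_real_derivative D (z + t *\<^sub>R c)) (at 0)"
        by (simp add: scaleR_add_left add_ac)
      then have "((\<lambda>s. u (z + s *\<^sub>R c)) has_real_derivative D (z + t *\<^sub>R c)) (at t)"
        using DERIV_shift[of "\<lambda>s. u (z + s *\<^sub>R c)" _ 0 t] by simp
      then have "(?f has_field_derivative D (z + t *\<^sub>R c) - D y) (at t)"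
        by (rule DERIV_diff) (auto intro!: derivative_eq_intros)
      then show "(?f has_field_derivative D (z + t *\<^sub>R c) - D y) (at t within closed_segment 0 \<tau>)"
        by (simp add: has_field_derivative_at_within)
      show "norm (D (z + t *\<^sub>R c) - D y) \<le> e"
        using d1[of "z + t *\<^sub>R c"] seg[OF t] by (auto simp: d_def dist_commute dist_real_def)
    qed auto
    then show "\<bar>u (z + \<tau> *\<^sub>R c) - u z - \<tau> * D y\<bar> \<le> e * \<bar>\<tau>\<bar>" by simp
  qed
qed

lemma norm_diff_Basis_component_le:
  fixes k c :: "'b::euclidean_space"
  assumes "c \<in> Basis"
  shows "norm (k - (k \<bullet> c) *\<^sub>R c) \<le> norm k"
proof (rule power2_le_imp_le)
  show "norm (k - (k \<bullet> c) *\<^sub>R c) ^ 2 \<le> norm k ^ 2"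
    using assms unfolding power2_norm_eq_inner by (simp add: inner_diff_left inner_diff_right inner_commute)
qed simp

lemma continuous_partials_approx:
  fixes u :: "'b::euclidean_space \<Rightarrow> real" and D :: "'b \<Rightarrow> 'b \<Rightarrow> real"
  assumes "open U" "y \<in> U" "S \<subseteq> Basis" "e > 0"
    and der: "\<And>z b. z \<in> U \<Longrightarrow> b \<in> Basis \<Longrightarrow> ((\<lambda>t. u (z + t *\<^sub>R b)) has_real_derivative D b z) (at 0)"
    and cont: "\<And>b. b \<in> Basis \<Longrightarrow> continuous_on U (D b)"
  shows "\<exists>d>0. \<forall>k. (\<forall>b\<in>Basis - S. k \<bullet> b = 0) \<longrightarrow> norm k < d \<longrightarrow>
           \<bar>u (y + k) - u y - (\<Sum>b\<in>S. (k \<bullet> b) * D b y)\<bar> \<le> e * norm k"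
  using finite_subset[OF \<open>S \<subseteq> Basis\<close> finite_Basis] \<open>S \<subseteq> Basis\<close> \<open>e > 0\<close>
  \<comment> \<open>Coordinate directions are added one at a time; the step from \<open>y + k'\<close> to \<open>y + k\<close>
     moves along the new direction only and is controlled by the mean value theorem.\<close>
proof (induction S arbitrary: e rule: finite_subset_induct')
  case empty
  have "k = 0" if "\<forall>b\<in>Basis. k \<bullet> b = 0" for k :: 'b
    using that by (simp add: euclidean_all_zero_iff)
  then show ?case by (intro exI[of _ 1]) fastforce
next
  case (insert c S)
  obtain d1 where "d1 > 0" and d1: "\<And>k. \<forall>b\<in>Basis - S. k \<bullet> b = 0 \<Longrightarrow> norm k < d1 \<Longrightarrow>
      \<bar>u (y + k) - u y - (\<Sum>b\<in>S. (k \<bullet> b) * D b y)\<bar> \<le> e/2 * norm k"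
    using insert.IH[of "e/2"] \<open>e > 0\<close> by auto
  obtain d2 where "d2 > 0" and d2: "\<And>z \<tau>. z \<in> ball y d2 \<Longrightarrow> z + \<tau> *\<^sub>R c \<in> ball y d2 \<Longrightarrow>
      \<bar>u (z + \<tau> *\<^sub>R c) - u z - \<tau> * D c y\<bar> \<le> e/2 * \<bar>\<tau>\<bar>"
    using continuous_partial_increment[OF assms(1,2), of "e/2" u c "D c"] der cont \<open>c \<in> Basis\<close> \<open>e > 0\<close>
    by auto
  show ?case
  proof (intro exI[of _ "min d1 d2"] conjI allI impI)
    fix k :: 'b assume kS: "\<forall>b\<in>Basis - insert c S. k \<bullet> b = 0" and k: "norm k < min d1 d2"
    define \<tau> where "\<tau> = k \<bullet> c"
    define k' where "k' = k - \<tau> *\<^sub>R c"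
    have k'k: "norm k' \<le> norm k" unfolding k'_def \<tau>_def by (rule norm_diff_Basis_component_le) fact
    have k'S: "\<forall>b\<in>Basis - S. k' \<bullet> b = 0"
      using kS \<open>c \<in> Basis\<close> by (auto simp: k'_def \<tau>_def inner_diff_left inner_Basis)
    have k'b: "k' \<bullet> b = k \<bullet> b" if "b \<in> S" for b
    proof -
      have "b \<in> Basis" "b \<noteq> c" using that \<open>c \<notin> S\<close> \<open>S \<subseteq> Basis\<close> by auto
      then show ?thesis using \<open>c \<in> Basis\<close> by (simp add: k'_def inner_diff_left inner_Basis)
    qed
    have "\<bar>u (y + k') - u y - (\<Sum>b\<in>S. (k \<bullet> b) * D b y)\<bar> \<le> e/2 * norm k"
    proof -
      have "\<bar>u (y + k') - u y - (\<Sum>b\<in>S. (k \<bullet> b) * D b y)\<bar> \<le> e/2 * norm k'"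
        using d1[OF k'S] k'k k by (simp add: k'b)
      also have "\<dots> \<le> e/2 * norm k" using k'k \<open>e > 0\<close> by simp
      finally show ?thesis .
    qed
    moreover have "\<bar>u (y + k) - u (y + k') - \<tau> * D c y\<bar> \<le> e/2 * norm k"
    proof -
      have "\<bar>u (y + k) - u (y + k') - \<tau> * D c y\<bar> \<le> e/2 * \<bar>\<tau>\<bar>"
        using d2[of "y + k'" \<tau>] k'k k by (simp add: k'_def dist_norm norm_minus_commute)
      also have "\<dots> \<le> e/2 * norm k"
        using Basis_le_norm[OF \<open>c \<in> Basis\<close>] \<open>e > 0\<close> by (simp add: \<tau>_def)
      finally show ?thesis .
    qed
    moreover have "(\<Sum>b\<in>insert c S. (k \<bullet> b) * D b y) = \<tau> * D c y + (\<Sum>b\<in>S. (k \<bullet> b) * D b y)"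
      using \<open>finite S\<close> \<open>c \<notin> S\<close> by (simp add: \<tau>_def)
    ultimately show "\<bar>u (y + k) - u y - (\<Sum>b\<in>insert c S. (k \<bullet> b) * D b y)\<bar> \<le> e * norm k"
      by linarith
  qed (use \<open>d1 > 0\<close> \<open>d2 > 0\<close> in auto)
qed

lemma has_derivative_of_continuous_partials:
  fixes u :: "'b::euclidean_space \<Rightarrow> real" and D :: "'b \<Rightarrow> 'b \<Rightarrow> real"
  assumes "open U" "y \<in> U"
    and der: "\<And>z b. z \<in> U \<Longrightarrow> b \<in> Basis \<Longrightarrow> ((\<lambda>t. u (z + t *\<^sub>R b)) has_real_derivative D b z) (at 0)"
    and cont: "\<And>b. b \<in> Basis \<Longrightarrow> continuous_on U (D b)"
  shows "(u has_derivative (\<lambda>k. \<Sum>b\<in>Basis. (k \<bullet> b) * D b y)) (at y)"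
  unfolding has_derivative_at_alt
proof (intro conjI allI impI)
  show "bounded_linear (\<lambda>k. \<Sum>b\<in>Basis. (k \<bullet> b) * D b y)"
    by (intro bounded_linear_sum bounded_linear_mult_const bounded_linear_inner_left)
  fix e :: real assume "e > 0"
  from continuous_partials_approx[OF assms(1,2) order_refl this der cont]
  obtain d where "d > 0" and "\<forall>k. norm k < d \<longrightarrow> \<bar>u (y + k) - u y - (\<Sum>b\<in>Basis. (k \<bullet> b) * D b y)\<bar> \<le> e * norm k"
    by auto
  then show "\<exists>d>0. \<forall>z. norm (z - y) < d \<longrightarrow>
      norm (u z - u y - (\<Sum>b\<in>Basis. (z - y) \<bullet> b * D b y)) \<le> e * norm (z - y)"
    by (intro exI[of _ d]) (auto dest: spec[of _ "_ - y"])
qed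

lemma Ck_on_continuous_pd:
  assumes "Ck_on k g U" "set vs \<subseteq> Basis" "length vs \<le> k"
  shows "continuous_on U (pd g vs)"
  using assms unfolding Ck_on_def by auto

lemma Ck_on_partial_has_derivative:
  assumes "Ck_on k g U" "set vs \<subseteq> Basis" "length vs < k" "z \<in> U" "b \<in> Basis"
  shows "((\<lambda>t. pd g vs (z + t *\<^sub>R b)) has_real_derivative pd g (b # vs) z) (at 0)"
proof -
  have "(\<lambda>t. pd g vs (z + t *\<^sub>R b)) differentiable (at 0)"
    using assms unfolding Ck_on_def by auto
  then show ?thesis by (simp add: DERIV_deriv_iff_real_differentiable)
qed

lemma Ck_on_pd_has_derivative:
  assumes "Ck_on k g U" "open U" "set vs \<subseteq> Basis" "length vs < k" "y \<in> U"
  shows "(pd g vs has_derivative (\<lambda>h. \<Sum>b\<in>Basis. (h \<bullet> b) * pd g (b # vs) y)) (at y)"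
proof (rule has_derivative_of_continuous_partials[OF assms(2,5)])
  show "((\<lambda>t. pd g vs (z + t *\<^sub>R b)) has_real_derivative pd g (b # vs) z) (at 0)"
    if "z \<in> U" "b \<in> Basis" for z b
    using Ck_on_partial_has_derivative[OF assms(1,3,4) that] .
  show "continuous_on U (pd g (b # vs))" if "b \<in> Basis" for b
    by (rule Ck_on_continuous_pd[OF assms(1)]) (use that assms(3,4) in auto)
qed

lemma Ck_on_pd_line_derivative:
  assumes "Ck_on k g U" "open U" "set vs \<subseteq> Basis" "length vs < k" "s\<^sub>0 + t *\<^sub>R x \<in> U"
  shows "((\<lambda>t. pd g vs (s\<^sub>0 + t *\<^sub>R x)) has_real_derivative
            (\<Sum>b\<in>Basis. (x \<bullet> b) * pd g (b # vs) (s\<^sub>0 + t *\<^sub>R x))) (at t)"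
proof -
  have "((\<lambda>t. s\<^sub>0 + t *\<^sub>R x) has_derivative (\<lambda>h. h *\<^sub>R x)) (at t)"
    by (auto intro!: derivative_eq_intros)
  from has_derivative_compose[OF this Ck_on_pd_has_derivative[OF assms]]
  show ?thesis unfolding has_field_derivative_def
    by (rule has_derivative_eq_rhs) (auto simp: fun_eq_iff sum_distrib_left algebra_simps)
qed

lemma abs_sum_Basis_inner_le:
  fixes x :: "'b::euclidean_space"
  shows "\<bar>\<Sum>b\<in>Basis. (x \<bullet> b) * F b\<bar> \<le> norm x * (\<Sum>b\<in>Basis. \<bar>F b\<bar>)"
proof -
  have "\<bar>\<Sum>b\<in>Basis. (x \<bullet> b) * F b\<bar> \<le> (\<Sum>b\<in>Basis. \<bar>x \<bullet> b\<bar> * \<bar>F b\<bar>)"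
    by (rule order_trans[OF sum_abs]) (simp add: abs_mult)
  also have "\<dots> \<le> (\<Sum>b\<in>Basis. norm x * \<bar>F b\<bar>)"
    by (intro sum_mono mult_right_mono Basis_le_norm) auto
  finally show ?thesis by (simp add: sum_distrib_left)
qed

lemma abs_sum3_Basis_inner_le:
  fixes x :: "'b::euclidean_space"
  shows "\<bar>\<Sum>b\<in>Basis. (x \<bullet> b) * (\<Sum>c\<in>Basis. (x \<bullet> c) * (\<Sum>d\<in>Basis. (x \<bullet> d) * a b c d))\<bar>
           \<le> norm x ^ 3 * (\<Sum>b\<in>Basis. \<Sum>c\<in>Basis. \<Sum>d\<in>Basis. \<bar>a b c d\<bar>)"
proof -
  have "\<bar>\<Sum>c\<in>Basis. (x \<bullet> c) * (\<Sum>d\<in>Basis. (x \<bullet> d) * a b c d)\<bar>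
          \<le> norm x ^ 2 * (\<Sum>c\<in>Basis. \<Sum>d\<in>Basis. \<bar>a b c d\<bar>)" for b
  proof -
    have "\<bar>\<Sum>c\<in>Basis. (x \<bullet> c) * (\<Sum>d\<in>Basis. (x \<bullet> d) * a b c d)\<bar>
            \<le> norm x * (\<Sum>c\<in>Basis. \<bar>\<Sum>d\<in>Basis. (x \<bullet> d) * a b c d\<bar>)"
      by (rule abs_sum_Basis_inner_le)
    also have "\<dots> \<le> norm x * (\<Sum>c\<in>Basis. norm x * (\<Sum>d\<in>Basis. \<bar>a b c d\<bar>))"
      by (intro mult_left_mono sum_mono abs_sum_Basis_inner_le) auto
    finally show ?thesis by (simp add: sum_distrib_left power2_eq_square mult.assoc)
  qed
  then have "norm x * (\<Sum>b\<in>Basis. \<bar>\<Sum>c\<in>Basis. (x \<bullet> c) * (\<Sum>d\<in>Basis. (x \<bullet> d) * a b c d)\<bar>)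
      \<le> norm x * (\<Sum>b\<in>Basis. norm x ^ 2 * (\<Sum>c\<in>Basis. \<Sum>d\<in>Basis. \<bar>a b c d\<bar>))"
    by (intro mult_left_mono sum_mono) auto
  with abs_sum_Basis_inner_le[of x] have "\<bar>\<Sum>b\<in>Basis. (x \<bullet> b) * (\<Sum>c\<in>Basis. (x \<bullet> c) * (\<Sum>d\<in>Basis. (x \<bullet> d) * a b c d))\<bar>
      \<le> norm x * (\<Sum>b\<in>Basis. norm x ^ 2 * (\<Sum>c\<in>Basis. \<Sum>d\<in>Basis. \<bar>a b c d\<bar>))"
    by (rule order_trans)
  then show ?thesis by (simp add: sum_distrib_left power3_eq_cube power2_eq_square mult.assoc)
qed

lemma Ck3_taylor2_lagrange:
  fixes g :: "'b::euclidean_space \<Rightarrow> real"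
  assumes C: "Ck_on 3 g U" "open U" and seg: "\<And>t. 0 \<le> t \<Longrightarrow> t \<le> 1 \<Longrightarrow> s\<^sub>0 + t *\<^sub>R x \<in> U"
  obtains t where "0 < t" "t < 1"
    "g (s\<^sub>0 + x) - g s\<^sub>0 - (\<Sum>b\<in>Basis. (x \<bullet> b) * pd g [b] s\<^sub>0)
       - (\<Sum>b\<in>Basis. \<Sum>c\<in>Basis. (x \<bullet> b) * (x \<bullet> c) * pd g [c, b] s\<^sub>0) / 2
     = (\<Sum>b\<in>Basis. (x \<bullet> b) * (\<Sum>c\<in>Basis. (x \<bullet> c) *
          (\<Sum>d\<in>Basis. (x \<bullet> d) * pd g [d, c, b] (s\<^sub>0 + t *\<^sub>R x)))) / 6"
proof -
  define \<phi>0 where "\<phi>0 t = g (s\<^sub>0 + t *\<^sub>R x)" for t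
  define \<phi>1 where "\<phi>1 t = (\<Sum>b\<in>Basis. (x \<bullet> b) * pd g [b] (s\<^sub>0 + t *\<^sub>R x))" for t
  define \<phi>2 where "\<phi>2 t = (\<Sum>b\<in>Basis. (x \<bullet> b) * (\<Sum>c\<in>Basis. (x \<bullet> c) * pd g [c, b] (s\<^sub>0 + t *\<^sub>R x)))" for t
  define \<phi>3 where "\<phi>3 t = (\<Sum>b\<in>Basis. (x \<bullet> b) * (\<Sum>c\<in>Basis. (x \<bullet> c) *
                   (\<Sum>d\<in>Basis. (x \<bullet> d) * pd g [d, c, b] (s\<^sub>0 + t *\<^sub>R x))))" for t
  define \<phi> where "\<phi> m = (if m = 0 then \<phi>0 else if m = 1 then \<phi>1 else if m = 2 then \<phi>2 else \<phi>3)"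
    for m :: nat
  have "(\<phi> m has_real_derivative \<phi> (Suc m) t) (at t)" if "m < 3" "0 \<le> t" "t \<le> 1" for m t
  proof -
    have "(\<phi>0 has_real_derivative \<phi>1 t) (at t)"
      using Ck_on_pd_line_derivative[OF C, of "[]"] seg[OF that(2,3)] unfolding \<phi>0_def \<phi>1_def by simp
    moreover have "(\<phi>1 has_real_derivative \<phi>2 t) (at t)" "(\<phi>2 has_real_derivative \<phi>3 t) (at t)"
      unfolding \<phi>1_def \<phi>2_def \<phi>3_def
      by (intro DERIV_sum DERIV_cmult Ck_on_pd_line_derivative[OF C] seg[OF that(2,3)]; simp)+
    moreover have "m = 0 \<or> m = 1 \<or> m = 2" using \<open>m < 3\<close> by linarith
    ultimately show ?thesis by (auto simp: \<phi>_def)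
  qed
  then obtain t where "0 < t" "t < 1" "\<phi>0 1 = (\<Sum>m<3. \<phi> m 0 / fact m * 1 ^ m) + \<phi> 3 t / fact 3 * 1 ^ 3"
    using Maclaurin[of 1 3 \<phi> \<phi>0] by (auto simp: \<phi>_def)
  then show ?thesis
    by (intro that[of t])
       (simp_all add: \<phi>_def \<phi>0_def \<phi>1_def \<phi>2_def \<phi>3_def eval_nat_numeral lessThan_Suc sum_distrib_left mult_ac)
qed

lemma Ck3_taylor2_remainder:
  fixes g :: "'b::euclidean_space \<Rightarrow> real"
  assumes C: "Ck_on 3 g U" "open U" "cball s\<^sub>0 r \<subseteq> U"
  obtains K where "\<And>x. norm x \<le> r \<Longrightarrow>
    \<bar>g (s\<^sub>0 + x) - g s\<^sub>0 - (\<Sum>b\<in>Basis. (x \<bullet> b) * pd g [b] s\<^sub>0)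
       - (\<Sum>b\<in>Basis. \<Sum>c\<in>Basis. (x \<bullet> b) * (x \<bullet> c) * pd g [c, b] s\<^sub>0) / 2\<bar> \<le> K * norm x ^ 3"
proof -
  define F where "F z = (\<Sum>b\<in>Basis. \<Sum>c\<in>Basis. \<Sum>d\<in>Basis. \<bar>pd g [d, c, b] z\<bar>)" for z
  have "continuous_on (cball s\<^sub>0 r) F"
    unfolding F_def using C(3)
    by (intro continuous_intros continuous_on_subset[OF Ck_on_continuous_pd[OF C(1)]]) auto
  then have "bounded (F ` cball s\<^sub>0 r)"
    by (intro compact_imp_bounded compact_continuous_image compact_cball)
  then obtain M where M: "\<And>z. z \<in> cball s\<^sub>0 r \<Longrightarrow> \<bar>F z\<bar> \<le> M"
    unfolding bounded_real by blast
  show ?thesis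
  proof (rule that[of "M / 6"])
    fix x :: 'b assume xr: "norm x \<le> r"
    have seg: "s\<^sub>0 + t *\<^sub>R x \<in> cball s\<^sub>0 r" if "0 \<le> t" "t \<le> 1" for t
      using that xr mult_left_le_one_le[of "norm x" t] by (simp add: dist_norm)
    obtain t where t: "0 < t" "t < 1" and taylor:
      "g (s\<^sub>0 + x) - g s\<^sub>0 - (\<Sum>b\<in>Basis. (x \<bullet> b) * pd g [b] s\<^sub>0)
         - (\<Sum>b\<in>Basis. \<Sum>c\<in>Basis. (x \<bullet> b) * (x \<bullet> c) * pd g [c, b] s\<^sub>0) / 2
       = (\<Sum>b\<in>Basis. (x \<bullet> b) * (\<Sum>c\<in>Basis. (x \<bullet> c) *
            (\<Sum>d\<in>Basis. (x \<bullet> d) * pd g [d, c, b] (s\<^sub>0 + t *\<^sub>R x)))) / 6"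
      using Ck3_taylor2_lagrange[OF C(1,2)] seg C(3) by blast
    have "\<bar>\<Sum>b\<in>Basis. (x \<bullet> b) * (\<Sum>c\<in>Basis. (x \<bullet> c) *
            (\<Sum>d\<in>Basis. (x \<bullet> d) * pd g [d, c, b] (s\<^sub>0 + t *\<^sub>R x)))\<bar> \<le> norm x ^ 3 * F (s\<^sub>0 + t *\<^sub>R x)"
      unfolding F_def by (rule abs_sum3_Basis_inner_le)
    also have "\<dots> \<le> norm x ^ 3 * M"
    proof (rule mult_left_mono)
      show "F (s\<^sub>0 + t *\<^sub>R x) \<le> M" using M[OF seg[of t]] t by (simp add: abs_le_iff)
    qed simp
    finally show "\<bar>g (s\<^sub>0 + x) - g s\<^sub>0 - (\<Sum>b\<in>Basis. (x \<bullet> b) * pd g [b] s\<^sub>0)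
       - (\<Sum>b\<in>Basis. \<Sum>c\<in>Basis. (x \<bullet> b) * (x \<bullet> c) * pd g [c, b] s\<^sub>0) / 2\<bar> \<le> M / 6 * norm x ^ 3"
      unfolding taylor by (simp add: mult.commute)
  qed
qed

section \<open>Moments of Lebesgue measure on a ball\<close>

lemma integrable_cball:
  fixes f :: "'b::euclidean_space \<Rightarrow> real"
  assumes "continuous_on (cball c r) f"
  shows "integrable lborel (\<lambda>x. indicator (cball c r) x * f x)"
  using borel_integrable_compact[of "cball c r" f] assms by simp

lemma emeasure_cball_diff_ball:
  fixes c :: "'b::euclidean_space"
  assumes "0 \<le> t" "t \<le> r"
  shows "emeasure lborel (cball c r - ball c t) = ennreal (unit_ball_vol DIM('b) * (r ^ DIM('b) - t ^ DIM('b)))"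
  using assms emeasure_lborel_ball_finite[of c t]
  by (subst emeasure_Diff) (auto simp: emeasure_cball emeasure_ball ennreal_minus right_diff_distrib)

lemma nn_integral_cball_norm_sq:
  assumes "0 \<le> \<delta>"
  shows "(\<integral>\<^sup>+x. ennreal (indicator (cball (0::'b::euclidean_space) \<delta>) x * norm x ^ 2) \<partial>lborel)
           = ennreal (unit_ball_vol DIM('b) * \<delta> ^ (DIM('b) + 2) * DIM('b) / (DIM('b) + 2))"
proof -
  define q where "q = DIM('b)"
  define w where "w = unit_ball_vol DIM('b)"
  have "0 \<le> w" by (simp add: w_def)
  define S where "S = {(x :: 'b, t :: real). norm x \<le> \<delta> \<and> 0 \<le> t \<and> t \<le> norm x}"
  define F where "F t = w * (\<delta> ^ q * t ^ 2 - 2 * t ^ (q + 2) / (q + 2))" for t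
  define G where "G x t = ennreal (2 * t) * indicator S (x, t)" for x t
  have "closed S" unfolding S_def
    by (intro closed_Collect_conj closed_Collect_le continuous_intros continuous_on_fst continuous_on_snd
        | simp add: case_prod_beta')+
  then have "S \<in> sets borel" by (rule borel_closed)
  have "case_prod G = (\<lambda>p. ennreal (2 * snd p) * indicator S p)"
    by (auto simp: G_def fun_eq_iff)
  then have G_meas: "case_prod G \<in> borel_measurable (lborel \<Otimes>\<^sub>M lborel)"
    by (simp add: lborel_prod measurable_lborel1)
       (intro borel_measurable_times_ennreal measurable_compose[OF _ measurable_ennreal]
          borel_measurable_indicator borel_measurable_continuous_onI continuous_intros \<open>S \<in> sets borel\<close>)
  have inner: "(\<integral>\<^sup>+t. G x t \<partial>lborel) = ennreal (indicator (cball 0 \<delta>) x * norm x ^ 2)" for x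
  proof (cases "norm x \<le> \<delta>")
    case True
    then have "G x t = ennreal (2 * t) * indicator {0..norm x} t" for t
      by (auto simp: G_def S_def indicator_def)
    moreover have "(\<integral>\<^sup>+t. ennreal (2 * t) * indicator {0..norm x} t \<partial>lborel) = norm x ^ 2 - 0 ^ 2"
      by (rule nn_integral_FTC_Icc[where F = "\<lambda>t. t ^ 2"]) (auto intro!: derivative_eq_intros)
    ultimately show ?thesis using True by simp
  qed (auto simp: G_def S_def)
  have outer: "(\<integral>\<^sup>+x. G x t \<partial>lborel) = ennreal (2 * t * (w * \<delta> ^ q - w * t ^ q)) * indicator {0..\<delta>} t" for t
  proof (cases "0 \<le> t \<and> t \<le> \<delta>")
    case True
    then have "G x t = ennreal (2 * t) * indicator (cball 0 \<delta> - ball 0 t) x" for x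
      by (auto simp: G_def S_def indicator_def)
    then show ?thesis
      using True by (simp add: nn_integral_cmult_indicator emeasure_cball_diff_ball w_def q_def
          ennreal_mult'[symmetric] right_diff_distrib)
  qed (auto simp: G_def S_def)
  have "(\<integral>\<^sup>+x. ennreal (indicator (cball (0::'b) \<delta>) x * norm x ^ 2) \<partial>lborel)
        = (\<integral>\<^sup>+t. (\<integral>\<^sup>+x. G x t \<partial>lborel) \<partial>lborel)"
    unfolding inner[symmetric] using lborel_pair.Fubini'[OF G_meas] by simp
  also have "\<dots> = F \<delta> - F 0"
    unfolding outer
  proof (rule nn_integral_FTC_Icc)
    show "(F has_real_derivative 2 * t * (w * \<delta> ^ q - w * t ^ q)) (at t)" for t
      unfolding F_def by (rule derivative_eq_intros refl | simp)+ (simp add: field_simps power_Suc)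
    show "0 \<le> 2 * t * (w * \<delta> ^ q - w * t ^ q)" if "t \<in> {0..\<delta>}" for t
      using that \<open>0 \<le> w\<close> by (auto intro!: mult_nonneg_nonneg mult_left_mono power_mono)
  qed (use assms in auto)
  also have "F \<delta> - F 0 = w * \<delta> ^ (q + 2) * q / (q + 2)"
    by (simp add: F_def field_simps power_add power2_eq_square)
  finally show ?thesis by (simp add: w_def q_def)
qed

lemma integral_cball_norm_sq:
  assumes "0 \<le> \<delta>"
  shows "(\<integral>x. indicator (cball (0::'b::euclidean_space) \<delta>) x * norm x ^ 2 \<partial>lborel)
           = measure lborel (cball (0::'b) \<delta>) * \<delta> ^ 2 * DIM('b) / (real DIM('b) + 2)"
proof -
  have "(\<integral>x. indicator (cball (0::'b) \<delta>) x * norm x ^ 2 \<partial>lborel)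
          = unit_ball_vol DIM('b) * \<delta> ^ (DIM('b) + 2) * DIM('b) / (DIM('b) + 2)"
    using nn_integral_cball_norm_sq[OF assms, where 'b='b] assms
    by (subst (asm) nn_integral_eq_integral) (auto intro!: integrable_cball continuous_intros)
  then show ?thesis
    using assms by (simp add: content_cball power_add power2_eq_square mult_ac)
qed

lemma integral_cball_invariant:
  fixes T :: "'b::euclidean_space \<Rightarrow> 'b" and g :: "'b \<Rightarrow> real"
  assumes "distr lborel borel T = lborel" "T \<in> borel_measurable borel"
    and "\<And>x. norm (T x) = norm x" "g \<in> borel_measurable borel"
  shows "(\<integral>x. indicator (cball 0 r) x * g (T x) \<partial>lborel) = (\<integral>x. indicator (cball 0 r) x * g x \<partial>lborel)"
proof -
  have "(\<integral>x. indicator (cball 0 r) x * g x \<partial>lborel)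
          = (\<integral>x. indicator (cball 0 r) x * g x \<partial>distr lborel borel T)"
    by (simp add: assms(1))
  also have "\<dots> = (\<integral>x. indicator (cball 0 r) (T x) * g (T x) \<partial>lborel)"
    using assms(2,4) by (intro integral_distr borel_measurable_times borel_measurable_indicator) auto
  finally show ?thesis by (simp add: indicator_def assms(3))
qed

lemma lborel_distr_reflect_Basis:
  fixes b :: "'b::euclidean_space"
  assumes "b \<in> Basis"
  shows "distr lborel borel (\<lambda>x. x - (2 * (x \<bullet> b)) *\<^sub>R b) = lborel"
proof -
  define c where "c j = (if j = b then -1 else 1 :: real)" for j :: 'b
  have reflect_eq: "(\<lambda>x. 0 + (\<Sum>j\<in>Basis. (c j * (x \<bullet> j)) *\<^sub>R j)) = (\<lambda>x. x - (2 * (x \<bullet> b)) *\<^sub>R b)"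
  proof (rule ext, rule euclidean_eqI)
    fix x :: 'b and i :: 'b assume "i \<in> Basis"
    then have "(\<Sum>j\<in>Basis. (c j * (x \<bullet> j)) *\<^sub>R j) \<bullet> i = c i * (x \<bullet> i)"
      by (simp add: inner_sum_left inner_Basis if_distrib sum.delta cong: if_cong)
    then show "(0 + (\<Sum>j\<in>Basis. (c j * (x \<bullet> j)) *\<^sub>R j)) \<bullet> i = (x - (2 * (x \<bullet> b)) *\<^sub>R b) \<bullet> i"
      using assms \<open>i \<in> Basis\<close> by (auto simp: c_def inner_diff_left inner_Basis)
  qed
  have det: "(\<Prod>j\<in>Basis. \<bar>c j\<bar>) = 1" by (intro prod.neutral) (simp add: c_def)
  have "(lborel :: 'b measure) = density (distr lborel borel (\<lambda>x. 0 + (\<Sum>j\<in>Basis. (c j * (x \<bullet> j)) *\<^sub>R j)))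
      (\<lambda>_. \<Prod>j\<in>Basis. \<bar>c j\<bar>)"
    by (rule lborel_affine_euclidean) (simp add: c_def)
  then have "lborel = distr lborel borel (\<lambda>x. x - (2 * (x \<bullet> b)) *\<^sub>R b)"
    unfolding reflect_eq det by (simp only: ennreal_1 density_1)
  then show ?thesis by (rule sym)
qed

lemma norm_reflect_Basis:
  fixes b :: "'b::euclidean_space"
  assumes "b \<in> Basis"
  shows "norm (x - (2 * (x \<bullet> b)) *\<^sub>R b) = norm x"
proof (rule power2_eq_imp_eq)
  show "norm (x - (2 * (x \<bullet> b)) *\<^sub>R b) ^ 2 = norm x ^ 2"
    using assms unfolding power2_norm_eq_inner
    by (simp add: inner_diff_left inner_diff_right inner_commute algebra_simps)
qed simp_all

lemma integral_cball_inner_Basis: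
  fixes b :: "'b::euclidean_space"
  assumes "b \<in> Basis"
  shows "(\<integral>x. indicator (cball 0 r) x * (x \<bullet> b) \<partial>lborel) = 0"
proof -
  have "(\<integral>x. indicator (cball 0 r) x * (x \<bullet> b) \<partial>lborel)
          = (\<integral>x. indicator (cball 0 r) x * ((x - (2 * (x \<bullet> b)) *\<^sub>R b) \<bullet> b) \<partial>lborel)"
    by (rule integral_cball_invariant[symmetric, OF lborel_distr_reflect_Basis[OF assms] _
          norm_reflect_Basis[OF assms]]) simp_all
  also have "\<dots> = - (\<integral>x. indicator (cball 0 r) x * (x \<bullet> b) \<partial>lborel)"
    using assms by (simp add: inner_diff_left)
  finally show ?thesis by simp
qed

lemma integral_cball_inner_Basis_mult_neq:
  fixes b c :: "'b::euclidean_space"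
  assumes "b \<in> Basis" "c \<in> Basis" "b \<noteq> c"
  shows "(\<integral>x. indicator (cball 0 r) x * ((x \<bullet> b) * (x \<bullet> c)) \<partial>lborel) = 0"
proof -
  let ?R = "\<lambda>x. x - (2 * (x \<bullet> b)) *\<^sub>R b"
  have "(\<integral>x. indicator (cball 0 r) x * ((x \<bullet> b) * (x \<bullet> c)) \<partial>lborel)
          = (\<integral>x. indicator (cball 0 r) x * ((?R x \<bullet> b) * (?R x \<bullet> c)) \<partial>lborel)"
    by (rule integral_cball_invariant[symmetric, OF lborel_distr_reflect_Basis[OF assms(1)] _
          norm_reflect_Basis[OF assms(1)]]) simp_all
  also have "\<dots> = - (\<integral>x. indicator (cball 0 r) x * ((x \<bullet> b) * (x \<bullet> c)) \<partial>lborel)"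
    using assms by (simp add: inner_diff_left inner_Basis)
  finally show ?thesis by simp
qed

lemma inner_permute_Basis:
  fixes x :: "'b::euclidean_space"
  assumes "i \<in> Basis"
  shows "(\<Sum>j\<in>Basis. (x \<bullet> \<sigma> j) *\<^sub>R j) \<bullet> i = x \<bullet> \<sigma> i"
  using assms by (simp add: inner_sum_left inner_Basis if_distrib sum.delta cong: if_cong)

lemma vimage_permute_Basis_box:
  fixes \<sigma> \<tau> :: "'b::euclidean_space \<Rightarrow> 'b"
  assumes "\<And>j. j \<in> Basis \<Longrightarrow> \<sigma> (\<tau> j) = j \<and> \<tau> (\<sigma> j) = j \<and> \<sigma> j \<in> Basis \<and> \<tau> j \<in> Basis"
  shows "(\<lambda>x. \<Sum>j\<in>Basis. (x \<bullet> \<sigma> j) *\<^sub>R j) -` box l u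
           = box (\<Sum>j\<in>Basis. (l \<bullet> \<tau> j) *\<^sub>R j) (\<Sum>j\<in>Basis. (u \<bullet> \<tau> j) *\<^sub>R j)"
proof (intro set_eqI iffI)
  fix x assume x: "x \<in> (\<lambda>x. \<Sum>j\<in>Basis. (x \<bullet> \<sigma> j) *\<^sub>R j) -` box l u"
  show "x \<in> box (\<Sum>j\<in>Basis. (l \<bullet> \<tau> j) *\<^sub>R j) (\<Sum>j\<in>Basis. (u \<bullet> \<tau> j) *\<^sub>R j)" unfolding mem_box
  proof
    fix j :: 'b assume j: "j \<in> Basis"
    with x assms[OF j] show "(\<Sum>j\<in>Basis. (l \<bullet> \<tau> j) *\<^sub>R j) \<bullet> j < x \<bullet> j \<and> x \<bullet> j < (\<Sum>j\<in>Basis. (u \<bullet> \<tau> j) *\<^sub>R j) \<bullet> j"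
      unfolding vimage_eq mem_box by (auto simp: inner_permute_Basis dest!: bspec[of _ _ "\<tau> j"])
  qed
next
  fix x assume x: "x \<in> box (\<Sum>j\<in>Basis. (l \<bullet> \<tau> j) *\<^sub>R j) (\<Sum>j\<in>Basis. (u \<bullet> \<tau> j) *\<^sub>R j)"
  show "x \<in> (\<lambda>x. \<Sum>j\<in>Basis. (x \<bullet> \<sigma> j) *\<^sub>R j) -` box l u" unfolding vimage_eq mem_box
  proof
    fix i :: 'b assume i: "i \<in> Basis"
    with x assms[OF i] show "l \<bullet> i < (\<Sum>j\<in>Basis. (x \<bullet> \<sigma> j) *\<^sub>R j) \<bullet> i \<and> (\<Sum>j\<in>Basis. (x \<bullet> \<sigma> j) *\<^sub>R j) \<bullet> i < u \<bullet> i"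
      unfolding mem_box by (auto simp: inner_permute_Basis dest!: bspec[of _ _ "\<sigma> i"])
  qed
qed

lemma lborel_distr_permute_Basis:
  fixes \<sigma> :: "'b::euclidean_space \<Rightarrow> 'b"
  assumes \<sigma>: "bij_betw \<sigma> Basis (Basis :: 'b::euclidean_space set)"
  shows "distr lborel borel (\<lambda>x::'b. \<Sum>j\<in>Basis. (x \<bullet> \<sigma> j) *\<^sub>R j) = lborel"
proof (rule lborel_eqI[symmetric])
  define \<tau> where "\<tau> = inv_into Basis \<sigma>"
  have \<tau>: "bij_betw \<tau> Basis Basis" unfolding \<tau>_def by (rule bij_betw_inv_into[OF \<sigma>])
  have \<sigma>\<tau>: "\<sigma> (\<tau> j) = j \<and> \<tau> (\<sigma> j) = j \<and> \<sigma> j \<in> Basis \<and> \<tau> j \<in> Basis" if "j \<in> Basis" for j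
    using that \<sigma> \<tau> by (auto simp: \<tau>_def bij_betw_inv_into_right bij_betw_inv_into_left bij_betwE)
  let ?P = "\<lambda>x::'b. \<Sum>j\<in>Basis. (x \<bullet> \<sigma> j) *\<^sub>R j"
  fix l u :: 'b assume le: "\<And>i. i \<in> Basis \<Longrightarrow> l \<bullet> i \<le> u \<bullet> i"
  have "emeasure (distr lborel borel ?P) (box l u)
        = emeasure lborel (box (\<Sum>j\<in>Basis. (l \<bullet> \<tau> j) *\<^sub>R j) (\<Sum>j\<in>Basis. (u \<bullet> \<tau> j) *\<^sub>R j))"
    by (subst emeasure_distr)
       (auto simp: vimage_permute_Basis_box[OF \<sigma>\<tau>] intro!: borel_measurable_continuous_onI continuous_intros)
  also have "\<dots> = (\<Prod>j\<in>Basis. (u - l) \<bullet> \<tau> j)"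
    using le \<sigma>\<tau> by (simp add: emeasure_lborel_box_eq inner_permute_Basis inner_diff_left)
  also have "\<dots> = (\<Prod>i\<in>Basis. (u - l) \<bullet> i)"
    using prod.reindex_bij_betw[OF \<tau>, of "\<lambda>i. (u - l) \<bullet> i"] by simp
  finally show "emeasure (distr lborel borel ?P) (box l u) = (\<Prod>i\<in>Basis. (u - l) \<bullet> i)" .
qed simp

lemma norm_power2_eq_sum_Basis: "norm (x::'b::euclidean_space) ^ 2 = (\<Sum>i\<in>Basis. (x \<bullet> i) ^ 2)"
  unfolding power2_norm_eq_inner by (subst euclidean_inner) (simp add: power2_eq_square)

lemma norm_permute_Basis:
  fixes \<sigma> :: "'b::euclidean_space \<Rightarrow> 'b"
  assumes "bij_betw \<sigma> Basis Basis"
  shows "norm (\<Sum>j\<in>Basis. (x \<bullet> \<sigma> j) *\<^sub>R j) = norm x"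
proof (rule power2_eq_imp_eq)
  have "norm (\<Sum>j\<in>Basis. (x \<bullet> \<sigma> j) *\<^sub>R j) ^ 2 = (\<Sum>i\<in>Basis. (x \<bullet> \<sigma> i) ^ 2)"
    unfolding norm_power2_eq_sum_Basis by (simp add: inner_permute_Basis)
  also have "\<dots> = (\<Sum>i\<in>Basis. (x \<bullet> i) ^ 2)"
    using sum.reindex_bij_betw[OF assms, of "\<lambda>i. (x \<bullet> i) ^ 2"] by simp
  also have "\<dots> = norm x ^ 2"
    by (rule norm_power2_eq_sum_Basis[symmetric])
  finally show "norm (\<Sum>j\<in>Basis. (x \<bullet> \<sigma> j) *\<^sub>R j) ^ 2 = norm x ^ 2" .
qed simp_all

lemma integral_cball_inner_Basis_sq:
  fixes b :: "'b::euclidean_space"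
  assumes "b \<in> Basis" "0 \<le> \<delta>"
  shows "(\<integral>x. indicator (cball 0 \<delta>) x * (x \<bullet> b) ^ 2 \<partial>lborel)
           = measure lborel (cball (0::'b) \<delta>) * \<delta> ^ 2 / (real DIM('b) + 2)"
proof -
  let ?m = "\<lambda>c::'b. \<integral>x. indicator (cball 0 \<delta>) x * (x \<bullet> c) ^ 2 \<partial>lborel"
  \<comment> \<open>Swapping two coordinates shows all \<open>?m c\<close> agree; their sum is the radial moment.\<close>
  have same: "?m c = ?m b" if "c \<in> Basis" for c
  proof -
    let ?\<sigma> = "Transposition.transpose b c"
    have \<sigma>: "bij_betw ?\<sigma> Basis (Basis :: 'b set)"
      using assms(1) that by (simp add: bij_betw_transpose_iff)
    have "?m b = (\<integral>x. indicator (cball 0 \<delta>) x * ((\<Sum>j\<in>Basis. (x \<bullet> ?\<sigma> j) *\<^sub>R j) \<bullet> b) ^ 2 \<partial>lborel)"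
      by (rule integral_cball_invariant[symmetric, OF lborel_distr_permute_Basis[OF \<sigma>] _
            norm_permute_Basis[OF \<sigma>]]) (simp_all add: borel_measurable_continuous_onI continuous_intros)
    also have "\<dots> = ?m c" using assms(1) by (simp add: inner_permute_Basis)
    finally show ?thesis by simp
  qed
  have "(\<integral>x. (\<Sum>c\<in>Basis. indicator (cball (0::'b) \<delta>) x * (x \<bullet> c) ^ 2) \<partial>lborel) = (\<Sum>c\<in>Basis. ?m c)"
    by (rule Bochner_Integration.integral_sum) (intro integrable_cball continuous_intros)
  then have "(\<Sum>c\<in>Basis. ?m c) = (\<integral>x. (\<Sum>c\<in>Basis. indicator (cball (0::'b) \<delta>) x * (x \<bullet> c) ^ 2) \<partial>lborel)"
    by simp
  also have "\<dots> = (\<integral>x. indicator (cball (0::'b) \<delta>) x * norm x ^ 2 \<partial>lborel)"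
    by (simp add: norm_power2_eq_sum_Basis sum_distrib_left)
  finally have "DIM('b) * ?m b = DIM('b) * (measure lborel (cball (0::'b) \<delta>) * \<delta> ^ 2 / (real DIM('b) + 2))"
    using same integral_cball_norm_sq[OF assms(2), where 'b='b] by (simp add: mult_ac)
  then show ?thesis by (simp add: times_divide_eq_right[symmetric] del: times_divide_eq_right)
qed

lemma integral_cball_inner_Basis_mult:
  fixes b c :: "'b::euclidean_space"
  assumes "b \<in> Basis" "c \<in> Basis" "0 \<le> \<delta>"
  shows "(\<integral>x. indicator (cball 0 \<delta>) x * ((x \<bullet> b) * (x \<bullet> c)) \<partial>lborel)
       = (if b = c then measure lborel (cball (0::'b) \<delta>) * \<delta> ^ 2 / (real DIM('b) + 2) else 0)"
  using integral_cball_inner_Basis_mult_neq[OF assms(1,2)] integral_cball_inner_Basis_sq[OF assms(1,3)]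
  by (auto simp: power2_eq_square)

lemma integral_cball_quadratic:
  assumes "0 \<le> \<delta>"
  shows "(\<integral>x. indicator (cball (0::'b::euclidean_space) \<delta>) x *
            (a + (\<Sum>b\<in>Basis. (x \<bullet> b) * l b) + (\<Sum>b\<in>Basis. \<Sum>c\<in>Basis. (x \<bullet> b) * (x \<bullet> c) * Q b c) / 2) \<partial>lborel)
       = measure lborel (cball (0::'b) \<delta>) * (a + (\<Sum>b\<in>Basis. Q b b) / (2 * (real DIM('b) + 2)) * \<delta>\<^sup>2)"
proof -
  let ?I = "\<lambda>x::'b. indicator (cball (0::'b) \<delta>) x :: real"
  have int: "integrable lborel (\<lambda>x. ?I x * f x)" if "continuous_on UNIV f" for f :: "'b \<Rightarrow> real"
    using integrable_cball continuous_on_subset[OF that] by blast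
  have i0: "integrable lborel (\<lambda>x. ?I x * a)" by (rule int) simp
  have i1: "integrable lborel (\<lambda>x. \<Sum>b\<in>Basis. l b * (?I x * (x \<bullet> b)))"
    by (intro Bochner_Integration.integrable_sum integrable_mult_right int continuous_intros)
  have i2: "integrable lborel (\<lambda>x. \<Sum>b\<in>Basis. \<Sum>c\<in>Basis. Q b c / 2 * (?I x * ((x \<bullet> b) * (x \<bullet> c))))"
    by (intro Bochner_Integration.integrable_sum integrable_mult_right int continuous_intros)
  have "(\<integral>x. ?I x * (a + (\<Sum>b\<in>Basis. (x \<bullet> b) * l b) + (\<Sum>b\<in>Basis. \<Sum>c\<in>Basis. (x \<bullet> b) * (x \<bullet> c) * Q b c) / 2) \<partial>lborel)
      = (\<integral>x. ?I x * a + (\<Sum>b\<in>Basis. l b * (?I x * (x \<bullet> b)))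
           + (\<Sum>b\<in>Basis. \<Sum>c\<in>Basis. Q b c / 2 * (?I x * ((x \<bullet> b) * (x \<bullet> c)))) \<partial>lborel)"
    by (intro Bochner_Integration.integral_cong) (simp_all add: algebra_simps sum_distrib_left sum_divide_distrib)
  also have "\<dots> = measure lborel (cball (0::'b) \<delta>) * a + (\<Sum>b\<in>Basis. l b * (\<integral>x. ?I x * (x \<bullet> b) \<partial>lborel))
      + (\<Sum>b\<in>Basis. \<Sum>c\<in>Basis. Q b c / 2 * (\<integral>x. ?I x * ((x \<bullet> b) * (x \<bullet> c)) \<partial>lborel))"
    unfolding Bochner_Integration.integral_add[OF Bochner_Integration.integrable_add[OF i0 i1] i2]
      Bochner_Integration.integral_add[OF i0 i1]
    by (subst (1 2) Bochner_Integration.integral_sum)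
       (auto simp: Bochner_Integration.integral_sum int continuous_intros
        intro!: Bochner_Integration.integrable_sum integrable_mult_right)
  also have "\<dots> = measure lborel (cball (0::'b) \<delta>) * (a + (\<Sum>b\<in>Basis. Q b b) / (2 * (real DIM('b) + 2)) * \<delta>\<^sup>2)"
  proof -
    have first: "(\<Sum>b\<in>Basis. l b * (\<integral>x. ?I x * (x \<bullet> b) \<partial>lborel)) = 0"
      by (intro sum.neutral) (simp add: integral_cball_inner_Basis)
    have second: "(\<Sum>b\<in>Basis. \<Sum>c\<in>Basis. Q b c / 2 * (\<integral>x. ?I x * ((x \<bullet> b) * (x \<bullet> c)) \<partial>lborel))
        = (\<Sum>b\<in>Basis. Q b b * (measure lborel (cball (0::'b) \<delta>) * \<delta> ^ 2 / (2 * (real DIM('b) + 2))))"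
      using assms
      by (intro sum.cong refl) (simp add: integral_cball_inner_Basis_mult if_distrib sum.delta cong: sum.cong if_cong)
    show ?thesis
      unfolding first second sum_distrib_right[symmetric] by (simp add: field_simps)
  qed
  finally show ?thesis .
qed

lemma integral_cball_translate:
  fixes g :: "'b::euclidean_space \<Rightarrow> real"
  assumes "continuous_on (cball s\<^sub>0 r) g"
  shows "(\<integral>s. indicator (cball s\<^sub>0 r) s * g s \<partial>lborel) = (\<integral>x. indicator (cball 0 r) x * g (s\<^sub>0 + x) \<partial>lborel)"
proof -
  have "distr lborel borel ((+) s\<^sub>0) = (lborel :: 'b measure)"
    using lborel_affine[of 1 s\<^sub>0] by (simp add: density_1)
  then have "(\<integral>s. indicator (cball s\<^sub>0 r) s * g s \<partial>lborel)
      = (\<integral>s. indicator (cball s\<^sub>0 r) s * g s \<partial>distr lborel borel ((+) s\<^sub>0))" by simp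
  also have "\<dots> = (\<integral>x. indicator (cball s\<^sub>0 r) (s\<^sub>0 + x) * g (s\<^sub>0 + x) \<partial>lborel)"
    using borel_measurable_continuous_on_indicator[OF _ assms]
    by (intro integral_distr) (auto intro!: borel_measurable_continuous_onI continuous_intros)
  also have "\<dots> = (\<integral>x. indicator (cball 0 r) x * g (s\<^sub>0 + x) \<partial>lborel)"
    by (intro Bochner_Integration.integral_cong) (simp_all add: indicator_def dist_norm)
  finally show ?thesis .
qed

lemma integral_cball_diff_bound:
  fixes g T :: "'b::euclidean_space \<Rightarrow> real"
  assumes "continuous_on (cball 0 \<delta>) g" "continuous_on (cball 0 \<delta>) T"
    and "\<And>x. norm x \<le> \<delta> \<Longrightarrow> \<bar>g x - T x\<bar> \<le> M"
  shows "\<bar>(\<integral>x. indicator (cball 0 \<delta>) x * g x \<partial>lborel) - (\<integral>x. indicator (cball 0 \<delta>) x * T x \<partial>lborel)\<bar>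
           \<le> measure lborel (cball (0::'b) \<delta>) * M"
proof -
  have int: "integrable lborel (\<lambda>x. indicator (cball 0 \<delta>) x * g x)" "integrable lborel (\<lambda>x. indicator (cball 0 \<delta>) x * T x)"
    using assms(1,2) by (auto intro: integrable_cball)
  have "\<bar>(\<integral>x. indicator (cball 0 \<delta>) x * g x \<partial>lborel) - (\<integral>x. indicator (cball 0 \<delta>) x * T x \<partial>lborel)\<bar>
        = \<bar>\<integral>x. indicator (cball 0 \<delta>) x * (g x - T x) \<partial>lborel\<bar>"
    using int by (simp add: right_diff_distrib)
  also have "\<dots> \<le> (\<integral>x. indicator (cball (0::'b) \<delta>) x * M \<partial>lborel)"
  proof (rule integral_abs_bound_integral)
    show "integrable lborel (\<lambda>x. indicator (cball 0 \<delta>) x * (g x - T x))"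
      using Bochner_Integration.integrable_diff[OF int] by (simp add: right_diff_distrib)
    show "integrable lborel (\<lambda>x. indicator (cball (0::'b) \<delta>) x * M)"
      by (rule integrable_cball) simp
    show "\<bar>indicator (cball 0 \<delta>) x * (g x - T x)\<bar> \<le> indicator (cball 0 \<delta>) x * M" for x
      using assms(3)[of x] by (simp add: indicator_def)
  qed
  finally show ?thesis by (simp add: mult.commute)
qed

lemma abs_divide_diff_le:
  fixes I V E M :: real
  assumes "0 < V" "\<bar>I - V * E\<bar> \<le> V * M"
  shows "\<bar>I / V - E\<bar> \<le> M"
proof -
  have "I / V - E = (I - V * E) / V" using assms(1) by (simp add: diff_divide_distrib)
  then have "\<bar>I / V - E\<bar> = \<bar>I - V * E\<bar> / V" using assms(1) by simp
  also have "\<dots> \<le> M" using assms by (simp add: pos_divide_le_eq mult.commute)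
  finally show ?thesis .
qed

lemma integral_cball_Ck3_expansion:
  fixes g :: "'b::euclidean_space \<Rightarrow> real"
  assumes C: "Ck_on 3 g U" "open U" "cball s\<^sub>0 r \<subseteq> U"
  obtains K where "\<And>\<delta>. 0 < \<delta> \<Longrightarrow> \<delta> \<le> r \<Longrightarrow>
    \<bar>(\<integral>s. indicator (cball s\<^sub>0 \<delta>) s * g s \<partial>lborel)
       - measure lborel (cball (0::'b) \<delta>) * (g s\<^sub>0 + laplacian g s\<^sub>0 / (2 * (real DIM('b) + 2)) * \<delta>\<^sup>2)\<bar>
     \<le> measure lborel (cball (0::'b) \<delta>) * (K * \<delta> ^ 3)"
proof -
  define T where "T x = g s\<^sub>0 + (\<Sum>b\<in>Basis. (x \<bullet> b) * pd g [b] s\<^sub>0)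
      + (\<Sum>b\<in>Basis. \<Sum>c\<in>Basis. (x \<bullet> b) * (x \<bullet> c) * pd g [c, b] s\<^sub>0) / 2" for x :: 'b
  obtain K where K: "\<And>x. norm x \<le> r \<Longrightarrow> \<bar>g (s\<^sub>0 + x) - T x\<bar> \<le> K * norm x ^ 3"
    using Ck3_taylor2_remainder[OF C] unfolding T_def diff_diff_eq by blast
  show ?thesis
  proof (rule that[of "\<bar>K\<bar>"])
    fix \<delta> :: real assume "0 < \<delta>" "\<delta> \<le> r"
    have "cball s\<^sub>0 \<delta> \<subseteq> U"
      using C(3) \<open>\<delta> \<le> r\<close> by (meson cball_subset_cball_iff order_refl order_trans)
    then have cont: "continuous_on (cball s\<^sub>0 \<delta>) g"
      using Ck_on_continuous_pd[OF C(1), of "[]"] by (simp add: continuous_on_subset)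
    have "(\<integral>x. indicator (cball 0 \<delta>) x * T x \<partial>lborel)
        = measure lborel (cball (0::'b) \<delta>) * (g s\<^sub>0 + laplacian g s\<^sub>0 / (2 * (real DIM('b) + 2)) * \<delta>\<^sup>2)"
      unfolding T_def laplacian_def using \<open>0 < \<delta>\<close> by (intro integral_cball_quadratic) simp
    moreover have "\<bar>(\<integral>x. indicator (cball 0 \<delta>) x * g (s\<^sub>0 + x) \<partial>lborel) - (\<integral>x. indicator (cball 0 \<delta>) x * T x \<partial>lborel)\<bar>
        \<le> measure lborel (cball (0::'b) \<delta>) * (\<bar>K\<bar> * \<delta> ^ 3)"
    proof (rule integral_cball_diff_bound)
      show "continuous_on (cball 0 \<delta>) (\<lambda>x. g (s\<^sub>0 + x))"
        by (rule continuous_on_compose2[OF cont]) (auto intro!: continuous_intros simp: dist_norm)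
      show "continuous_on (cball 0 \<delta>) T" unfolding T_def by (intro continuous_intros) auto
      show "\<bar>g (s\<^sub>0 + x) - T x\<bar> \<le> \<bar>K\<bar> * \<delta> ^ 3" if "norm x \<le> \<delta>" for x
      proof -
        have "\<bar>g (s\<^sub>0 + x) - T x\<bar> \<le> \<bar>K\<bar> * norm x ^ 3"
          using that \<open>\<delta> \<le> r\<close> by (intro order_trans[OF K[of x]] mult_right_mono) auto
        also have "\<dots> \<le> \<bar>K\<bar> * \<delta> ^ 3" using that by (intro mult_left_mono power_mono) auto
        finally show ?thesis .
      qed
    qed
    ultimately show "\<bar>(\<integral>s. indicator (cball s\<^sub>0 \<delta>) s * g s \<partial>lborel)
        - measure lborel (cball (0::'b) \<delta>) * (g s\<^sub>0 + laplacian g s\<^sub>0 / (2 * (real DIM('b) + 2)) * \<delta>\<^sup>2)\<bar>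
      \<le> measure lborel (cball (0::'b) \<delta>) * (\<bar>K\<bar> * \<delta> ^ 3)"
      unfolding integral_cball_translate[OF cont] by simp
  qed
qed

lemma ball_average_expansion:
  fixes g :: "'b::euclidean_space \<Rightarrow> real"
  assumes "C3_near g s\<^sub>0"
  shows "(\<lambda>\<delta>. (\<integral>s. indicator (cball s\<^sub>0 \<delta>) s * g s \<partial>lborel) / measure lborel (cball s\<^sub>0 \<delta>)
              - (g s\<^sub>0 + laplacian g s\<^sub>0 / (2 * (real DIM('b) + 2)) * \<delta>\<^sup>2)) \<in> O[at_right 0](\<lambda>\<delta>. \<delta> ^ 3)"
proof -
  obtain U where U: "open U" "s\<^sub>0 \<in> U" "Ck_on 3 g U"
    using assms unfolding C3_near_def by blast
  obtain r where "r > 0" "cball s\<^sub>0 r \<subseteq> U"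
    using U(1,2) open_contains_cball[of U] by blast
  obtain K where K: "\<And>\<delta>. 0 < \<delta> \<Longrightarrow> \<delta> \<le> r \<Longrightarrow>
    \<bar>(\<integral>s. indicator (cball s\<^sub>0 \<delta>) s * g s \<partial>lborel)
       - measure lborel (cball (0::'b) \<delta>) * (g s\<^sub>0 + laplacian g s\<^sub>0 / (2 * (real DIM('b) + 2)) * \<delta>\<^sup>2)\<bar>
     \<le> measure lborel (cball (0::'b) \<delta>) * (K * \<delta> ^ 3)"
    by (rule integral_cball_Ck3_expansion[OF U(3,1) \<open>cball s\<^sub>0 r \<subseteq> U\<close>]) (rule that)
  have "eventually (\<lambda>\<delta>. norm ((\<integral>s. indicator (cball s\<^sub>0 \<delta>) s * g s \<partial>lborel) / measure lborel (cball s\<^sub>0 \<delta>)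
      - (g s\<^sub>0 + laplacian g s\<^sub>0 / (2 * (real DIM('b) + 2)) * \<delta>\<^sup>2)) \<le> K * norm (\<delta> ^ 3)) (at_right 0)"
    using eventually_at_right_real[OF \<open>r > 0\<close>]
  proof eventually_elim
    case (elim \<delta>)
    define V where "V = measure lborel (cball (0::'b) \<delta>)"
    have V: "V > 0" "measure lborel (cball s\<^sub>0 \<delta>) = V"
      using elim by (simp_all add: V_def content_cball)
    let ?I = "\<integral>s. indicator (cball s\<^sub>0 \<delta>) s * g s \<partial>lborel"
      and ?E = "g s\<^sub>0 + laplacian g s\<^sub>0 / (2 * (real DIM('b) + 2)) * \<delta>\<^sup>2"
    have "\<bar>?I - V * ?E\<bar> \<le> V * (K * \<delta> ^ 3)"
      unfolding V_def using elim by (intro K) auto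
    then have "\<bar>?I / V - ?E\<bar> \<le> K * \<delta> ^ 3" by (rule abs_divide_diff_le[OF V(1)])
    then show ?case using V elim by simp
  qed
  then show ?thesis by (rule bigoI)
qed

section \<open>Expansion of a quotient\<close>

lemma bigo_cmult_left:
  fixes f g :: "real \<Rightarrow> real"
  shows "f \<in> O[F](g) \<Longrightarrow> (\<lambda>x. c * f x) \<in> O[F](g)"
  by (cases "c = 0") simp_all

lemma tendsto_of_quadratic_expansion:
  fixes a :: "real \<Rightarrow> real"
  assumes "(\<lambda>\<delta>. a \<delta> - (\<alpha> + A * \<delta>\<^sup>2)) \<in> O[at_right 0](\<lambda>\<delta>. \<delta> ^ 3)"
  shows "(a \<longlongrightarrow> \<alpha>) (at_right 0)"
proof -
  have "(\<lambda>\<delta>::real. \<delta> ^ 3) \<in> o[at_right 0](\<lambda>_. 1)"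
    by (rule smalloI_tendsto) (auto intro!: tendsto_eq_intros)
  from smalloD_tendsto[OF landau_o.big_small_trans[OF assms this]]
  have "((\<lambda>\<delta>. a \<delta> - (\<alpha> + A * \<delta>\<^sup>2)) \<longlongrightarrow> 0) (at_right 0)" by simp
  then have "((\<lambda>\<delta>. (a \<delta> - (\<alpha> + A * \<delta>\<^sup>2)) + (\<alpha> + A * \<delta>\<^sup>2)) \<longlongrightarrow> 0 + (\<alpha> + A * 0\<^sup>2)) (at_right 0)"
    by (intro tendsto_intros) (auto intro!: tendsto_eq_intros)
  then show ?thesis by simp
qed

lemma quotient_expansion:
  fixes a b :: "real \<Rightarrow> real"
  assumes a: "(\<lambda>\<delta>. a \<delta> - (\<alpha> + A * \<delta>\<^sup>2)) \<in> O[at_right 0](\<lambda>\<delta>. \<delta> ^ 3)"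
    and b: "(\<lambda>\<delta>. b \<delta> - (\<beta> + B * \<delta>\<^sup>2)) \<in> O[at_right 0](\<lambda>\<delta>. \<delta> ^ 3)"
    and "\<beta> \<noteq> 0"
  shows "(\<lambda>\<delta>. a \<delta> / b \<delta> - \<alpha> / \<beta> - (A - \<alpha> / \<beta> * B) / \<beta> * \<delta>\<^sup>2) \<in> O[at_right 0](\<lambda>\<delta>. \<delta> ^ 3)"
proof -
  define C where "C = (A - \<alpha> / \<beta> * B) / \<beta>"
  define ea where "ea \<delta> = a \<delta> - (\<alpha> + A * \<delta>\<^sup>2)" for \<delta>
  define eb where "eb \<delta> = b \<delta> - (\<beta> + B * \<delta>\<^sup>2)" for \<delta>
  \<comment> \<open>Since \<open>C \<beta>\<^sup>2 = A \<beta> - \<alpha> B\<close>, the \<open>\<delta>\<^sup>2\<close> terms cancel in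
     \<open>\<beta> a - \<alpha> b - C \<delta>\<^sup>2 \<beta> b\<close>, leaving the numerator \<open>N\<close> of \<open>a / b - \<alpha> / \<beta> - C \<delta>\<^sup>2\<close>.\<close>
  define N where "N \<delta> = \<beta> * ea \<delta> - \<alpha> * eb \<delta> - C * \<beta> * (B * \<delta> ^ 4 + eb \<delta> * \<delta>\<^sup>2)" for \<delta> :: real
  have b_lim: "(b \<longlongrightarrow> \<beta>) (at_right 0)" by (rule tendsto_of_quadratic_expansion[OF b])
  then have b_nz: "eventually (\<lambda>\<delta>. b \<delta> \<noteq> 0) (at_right 0)"
    using \<open>\<beta> \<noteq> 0\<close> by (rule tendsto_imp_eventually_ne)
  have "(\<lambda>\<delta>. 1 / b \<delta>) \<in> O[at_right 0](\<lambda>_. 1)"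
    by (rule bigoI_tendsto[where c = "1 / \<beta>"]) (use b_lim \<open>\<beta> \<noteq> 0\<close> in \<open>auto intro!: tendsto_eq_intros\<close>)
  moreover have "N \<in> O[at_right 0](\<lambda>\<delta>. \<delta> ^ 3)"
  proof -
    have "(\<lambda>\<delta>::real. \<delta> ^ 4) \<in> O[at_right 0](\<lambda>\<delta>. \<delta> ^ 3)"
      by (intro bigoI[where c = 1] eventually_mono[OF eventually_at_right_real[of 0 1]])
         (auto simp: power_mono_iff abs_mult power_Suc)
    moreover have "(\<lambda>\<delta>::real. \<delta>\<^sup>2) \<in> O[at_right 0](\<lambda>_. 1)"
      by (rule bigoI_tendsto[where c = 0]) (auto intro!: tendsto_eq_intros)
    ultimately show ?thesis
      unfolding N_def using a b unfolding ea_def[symmetric] eb_def[symmetric]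
      by (intro sum_in_bigo bigo_cmult_left landau_o.big_1_mult) auto
  qed
  ultimately have bound: "(\<lambda>\<delta>. 1 / \<beta> * (N \<delta> * (1 / b \<delta>))) \<in> O[at_right 0](\<lambda>\<delta>. \<delta> ^ 3)"
    by (intro bigo_cmult_left landau_o.big_1_mult)
  have eq: "eventually (\<lambda>\<delta>. 1 / \<beta> * (N \<delta> * (1 / b \<delta>))
      = a \<delta> / b \<delta> - \<alpha> / \<beta> - (A - \<alpha> / \<beta> * B) / \<beta> * \<delta>\<^sup>2) (at_right 0)"
    using b_nz by eventually_elim
      (use \<open>\<beta> \<noteq> 0\<close> in \<open>simp add: N_def C_def ea_def eb_def field_simps power2_eq_square power4_eq_xxxx\<close>)
  show ?thesis using landau_o.big.in_cong[OF eq] bound by blast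
qed

section \<open>Rejection ABC\<close>

lemma integral_sample_mean_PiM:
  assumes M: "prob_space M" and h: "integrable M h" and n: "n \<ge> 1"
  shows "(\<integral>x. (1 / real n) * (\<Sum>j<n. h (x j)) \<partial>PiM {..<n} (\<lambda>_. M)) = (\<integral>t. h t \<partial>M)"
proof -
  have comp: "distr (PiM {..<n} (\<lambda>_. M)) M (\<lambda>x. x j) = M"
    and comp_meas: "(\<lambda>x. x j) \<in> measurable (PiM {..<n} (\<lambda>_. M)) M" if "j < n" for j
    using that M by (auto intro: distr_PiM_component measurable_component_singleton)
  have h_meas: "h \<in> borel_measurable M" using h by auto
  have "integrable (PiM {..<n} (\<lambda>_. M)) (\<lambda>x. h (x j))" if "j < n" for j
    using integrable_distr_eq[OF comp_meas[OF that] h_meas] comp[OF that] h by simp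
  moreover have "(\<integral>x. h (x j) \<partial>PiM {..<n} (\<lambda>_. M)) = (\<integral>t. h t \<partial>M)" if "j < n" for j
    using integral_distr[OF comp_meas[OF that] h_meas] comp[OF that] by simp
  ultimately show ?thesis
    using n by (simp add: Bochner_Integration.integral_sum)
qed

lemma post_mean_eq_phi_div:
  assumes "0 < marg_S f s\<^sub>0"
  shows "post_mean f h s\<^sub>0 = phi f h s\<^sub>0 / marg_S f s\<^sub>0"
  using assms by (simp add: post_mean_def cond_dens_def phi_def)

locale joint_density =
  fixes f :: "'b::euclidean_space \<Rightarrow> 'a::euclidean_space \<Rightarrow> real"
  assumes f_meas: "(\<lambda>(s, t). f s t) \<in> borel_measurable borel"
    and f_nonneg: "\<And>s t. f s t \<ge> 0"
    and f_prob: "prob_space (joint f)"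
begin

lemma joint_eq_density: "joint f = density lborel (\<lambda>p. ennreal (case_prod f p))"
  by (simp add: joint_def case_prod_beta')

lemma borel_measurable_joint_density [measurable]: "case_prod f \<in> borel_measurable lborel"
  using f_meas by (simp add: measurable_lborel1)

lemma integrable_joint_density: "integrable lborel (case_prod f)"
proof (rule integrableI_nonneg)
  have "emeasure (joint f) (space (joint f)) = 1"
    using f_prob by (rule prob_space.emeasure_space_1)
  then show "(\<integral>\<^sup>+p. ennreal (case_prod f p) \<partial>lborel) < \<infinity>"
    by (simp add: joint_eq_density emeasure_density)
qed (auto simp: f_nonneg)

lemma borel_measurable_marg_S: "marg_S f \<in> borel_measurable lborel"
proof -
  have "case_prod f \<in> borel_measurable (lborel \<Otimes>\<^sub>M lborel :: ('b \<times> 'a) measure)"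
    by (simp add: lborel_prod)
  then show ?thesis
    unfolding marg_S_def by (rule lborel.borel_measurable_lebesgue_integral)
qed

lemma integral_joint_cylinder:
  fixes w :: "'a \<Rightarrow> real"
  assumes "integrable lborel (\<lambda>p. case_prod f p * w (snd p))"
  shows "(\<integral>p. indicator (cball s\<^sub>0 \<delta> \<times> UNIV) p * (case_prod f p * w (snd p)) \<partial>lborel)
       = (\<integral>s. indicator (cball s\<^sub>0 \<delta>) s * (\<integral>t. w t * f s t \<partial>lborel) \<partial>lborel)"
proof -
  let ?G = "\<lambda>p. indicator (cball s\<^sub>0 \<delta> \<times> UNIV) p * (case_prod f p * w (snd p))"
  have "integrable (lborel \<Otimes>\<^sub>M lborel) ?G"
    using integrable_mult_indicator[OF _ assms, of "cball s\<^sub>0 \<delta> \<times> UNIV"]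
    by (simp add: lborel_prod borel_closed closed_Times)
  then have "(\<integral>p. ?G p \<partial>(lborel \<Otimes>\<^sub>M lborel)) = (\<integral>s. (\<integral>t. ?G (s, t) \<partial>lborel) \<partial>lborel)"
    by (rule lborel_pair.integral_fst'[symmetric])
  also have "\<dots> = (\<integral>s. indicator (cball s\<^sub>0 \<delta>) s * (\<integral>t. w t * f s t \<partial>lborel) \<partial>lborel)"
    by (intro Bochner_Integration.integral_cong refl)
       (simp add: indicator_times mult_ac flip: integral_mult_right_zero)
  finally show ?thesis by (simp add: lborel_prod)
qed

lemma emeasure_joint_cylinder:
  "emeasure (joint f) (cball s\<^sub>0 \<delta> \<times> UNIV) = ennreal (\<integral>s. indicator (cball s\<^sub>0 \<delta>) s * marg_S f s \<partial>lborel)"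
proof -
  let ?C = "cball s\<^sub>0 \<delta> \<times> (UNIV :: 'a set)"
  have C: "?C \<in> sets borel" by (simp add: borel_closed closed_Times)
  have "emeasure (joint f) ?C = (\<integral>\<^sup>+p. ennreal (case_prod f p) * indicator ?C p \<partial>lborel)"
    using C unfolding joint_eq_density by (intro emeasure_density) auto
  also have "\<dots> = (\<integral>\<^sup>+p. ennreal (indicator ?C p * (case_prod f p * 1)) \<partial>lborel)"
    by (intro nn_integral_cong) (simp add: indicator_def)
  also have "\<dots> = ennreal (\<integral>p. indicator ?C p * (case_prod f p * 1) \<partial>lborel)"
    using integrable_mult_indicator[OF _ integrable_joint_density, of ?C] C
    by (intro nn_integral_eq_integral) (auto simp: f_nonneg)
  finally show ?thesis
    using integral_joint_cylinder[of "\<lambda>_. 1" s\<^sub>0 \<delta>] integrable_joint_density by (simp add: marg_S_def)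
qed

lemma abc_accepted_eq_distr:
  "abc_accepted f s\<^sub>0 \<delta> = distr (uniform_measure (joint f) (cball s\<^sub>0 \<delta> \<times> UNIV)) lborel snd"
proof -
  have "{(s, t). norm (s - s\<^sub>0) \<le> \<delta>} = cball s\<^sub>0 \<delta> \<times> (UNIV :: 'a set)"
    by (auto simp: dist_norm norm_minus_commute)
  then show ?thesis by (simp add: abc_accepted_def)
qed

text \<open>On a null acceptance region \<open>uniform_measure\<close> is the zero measure, hence the positivity
  hypotheses below.\<close>

lemma uniform_measure_joint_cylinder:
  assumes pos: "0 < (\<integral>s. indicator (cball s\<^sub>0 \<delta>) s * marg_S f s \<partial>lborel)"
  shows "uniform_measure (joint f) (cball s\<^sub>0 \<delta> \<times> UNIV) = density (joint f)
           (\<lambda>p. ennreal (indicator (cball s\<^sub>0 \<delta> \<times> UNIV) p / (\<integral>s. indicator (cball s\<^sub>0 \<delta>) s * marg_S f s \<partial>lborel)))"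
    and "prob_space (uniform_measure (joint f) (cball s\<^sub>0 \<delta> \<times> UNIV))"
proof -
  have "(\<lambda>p. indicator (cball s\<^sub>0 \<delta> \<times> UNIV) p / emeasure (joint f) (cball s\<^sub>0 \<delta> \<times> UNIV))
      = (\<lambda>p. ennreal (indicator (cball s\<^sub>0 \<delta> \<times> UNIV) p / (\<integral>s. indicator (cball s\<^sub>0 \<delta>) s * marg_S f s \<partial>lborel)))"
    using pos by (auto simp: fun_eq_iff emeasure_joint_cylinder indicator_def divide_ennreal[symmetric])
  then show "uniform_measure (joint f) (cball s\<^sub>0 \<delta> \<times> UNIV) = density (joint f)
           (\<lambda>p. ennreal (indicator (cball s\<^sub>0 \<delta> \<times> UNIV) p / (\<integral>s. indicator (cball s\<^sub>0 \<delta>) s * marg_S f s \<partial>lborel)))"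
    unfolding uniform_measure_def by (rule arg_cong)
  show "prob_space (uniform_measure (joint f) (cball s\<^sub>0 \<delta> \<times> UNIV))"
    by (rule prob_space_uniform_measure) (use pos in \<open>auto simp: emeasure_joint_cylinder\<close>)
qed

lemma abc_accepted_integral:
  fixes h :: "'a \<Rightarrow> real"
  assumes h_meas: "h \<in> borel_measurable borel" and h_int: "integrable (joint f) (\<lambda>(s, t). h t)"
    and pos: "0 < (\<integral>s. indicator (cball s\<^sub>0 \<delta>) s * marg_S f s \<partial>lborel)"
  shows "prob_space (abc_accepted f s\<^sub>0 \<delta>)" "integrable (abc_accepted f s\<^sub>0 \<delta>) h"
    "(\<integral>t. h t \<partial>abc_accepted f s\<^sub>0 \<delta>) = (\<integral>s. indicator (cball s\<^sub>0 \<delta>) s * phi f h s \<partial>lborel)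
                                        / (\<integral>s. indicator (cball s\<^sub>0 \<delta>) s * marg_S f s \<partial>lborel)"
proof -
  define A where "A = (\<integral>s. indicator (cball s\<^sub>0 \<delta>) s * marg_S f s \<partial>lborel)"
  define C where "C = cball s\<^sub>0 \<delta> \<times> (UNIV :: 'a set)"
  define U where "U = uniform_measure (joint f) C"
  have C: "C \<in> sets borel" by (simp add: C_def borel_closed closed_Times)
  have U: "U = density (joint f) (\<lambda>p. ennreal (indicator C p / A))" "prob_space U"
    using uniform_measure_joint_cylinder[OF pos] by (simp_all add: U_def C_def A_def)
  have snd_borel: "(snd :: 'b \<times> 'a \<Rightarrow> 'a) \<in> borel_measurable borel"
    by (intro borel_measurable_continuous_onI continuous_intros)
  have U_sets: "sets U = sets (borel :: ('b \<times> 'a) measure)"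
    by (simp add: U_def joint_eq_density)
  have snd_meas: "snd \<in> measurable U (lborel :: 'a measure)"
    by (subst measurable_cong_sets[OF U_sets refl]) (simp add: measurable_lborel2 snd_borel)
  have h_lborel: "h \<in> borel_measurable lborel" using h_meas by (simp add: measurable_lborel1)
  have ind_meas: "(\<lambda>p. indicator C p / A) \<in> borel_measurable (joint f)"
    using C by (simp add: joint_eq_density measurable_lborel1)
  have h_snd_meas: "(\<lambda>p. h (snd p)) \<in> borel_measurable (joint f)"
    using measurable_compose[OF snd_borel h_meas] by (simp add: joint_eq_density measurable_lborel1 o_def)
  show "prob_space (abc_accepted f s\<^sub>0 \<delta>)"
    unfolding abc_accepted_eq_distr U_def[unfolded C_def, symmetric]
    by (rule prob_space.prob_space_distr[OF U(2) snd_meas])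
  have "integrable (joint f) (\<lambda>p. indicator C p *\<^sub>R h (snd p))"
    using h_int C by (intro integrable_mult_indicator) (simp_all add: joint_eq_density case_prod_beta')
  then have "integrable U (\<lambda>p. h (snd p))" unfolding U(1)
    using integrable_divide[of "joint f" "\<lambda>p. indicator C p *\<^sub>R h (snd p)" A] pos
    by (subst integrable_density[OF h_snd_meas ind_meas]) (auto simp: A_def)
  then show "integrable (abc_accepted f s\<^sub>0 \<delta>) h"
    unfolding abc_accepted_eq_distr U_def[unfolded C_def, symmetric]
    using integrable_distr_eq[OF snd_meas h_lborel] by simp
  have h_density: "integrable lborel (\<lambda>p. case_prod f p * h (snd p))"
    using h_int integrable_density[OF _ borel_measurable_joint_density, of "\<lambda>p. h (snd p)"] h_snd_meas
    by (simp add: joint_eq_density case_prod_beta' f_nonneg measurable_lborel1)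
  have "(\<integral>t. h t \<partial>abc_accepted f s\<^sub>0 \<delta>) = (\<integral>p. h (snd p) \<partial>U)"
    unfolding abc_accepted_eq_distr U_def[unfolded C_def, symmetric]
    by (rule integral_distr[OF snd_meas h_lborel])
  also have "\<dots> = (\<integral>p. (indicator C p / A) *\<^sub>R h (snd p) \<partial>joint f)"
    unfolding U(1) by (rule integral_density[OF h_snd_meas ind_meas]) (use pos in \<open>auto simp: A_def\<close>)
  also have "\<dots> = (\<integral>p. case_prod f p *\<^sub>R ((indicator C p / A) *\<^sub>R h (snd p)) \<partial>lborel)"
    unfolding joint_eq_density using h_snd_meas
    by (intro integral_density) (use C in \<open>auto simp: f_nonneg joint_eq_density measurable_lborel1\<close>)
  also have "\<dots> = (\<integral>p. indicator C p * (case_prod f p * h (snd p)) \<partial>lborel) / A"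
    by (simp add: field_simps)
  also have "\<dots> = (\<integral>s. indicator (cball s\<^sub>0 \<delta>) s * phi f h s \<partial>lborel) / A"
    unfolding C_def integral_joint_cylinder[OF h_density] by (simp add: phi_def)
  finally show "(\<integral>t. h t \<partial>abc_accepted f s\<^sub>0 \<delta>) = (\<integral>s. indicator (cball s\<^sub>0 \<delta>) s * phi f h s \<partial>lborel) / A" .
qed

lemma abc_expect_eq_ratio:
  assumes "h \<in> borel_measurable borel" "integrable (joint f) (\<lambda>(s, t). h t)" "n \<ge> 1"
    and "0 < (\<integral>s. indicator (cball s\<^sub>0 \<delta>) s * marg_S f s \<partial>lborel)"
  shows "abc_expect f h s\<^sub>0 \<delta> n = (\<integral>s. indicator (cball s\<^sub>0 \<delta>) s * phi f h s \<partial>lborel)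
                                  / (\<integral>s. indicator (cball s\<^sub>0 \<delta>) s * marg_S f s \<partial>lborel)"
  unfolding abc_expect_def
  using integral_sample_mean_PiM[OF abc_accepted_integral(1,2)[OF assms(1,2,4)] assms(3)]
    abc_accepted_integral(3)[OF assms(1,2,4)] by simp

lemma abc_bias_expansion:
  assumes h_meas: "h \<in> borel_measurable borel" and h_int: "integrable (joint f) (\<lambda>(s, t). h t)"
    and n: "n \<ge> 1" and pos: "0 < marg_S f s\<^sub>0"
    and C3: "C3_near (marg_S f) s\<^sub>0" "C3_near (phi f h) s\<^sub>0"
  shows "(\<lambda>\<delta>. abc_bias f h s\<^sub>0 \<delta> n
            - (laplacian (phi f h) s\<^sub>0 - post_mean f h s\<^sub>0 * laplacian (marg_S f) s\<^sub>0)
              / (2 * (real DIM('b) + 2) * marg_S f s\<^sub>0) * \<delta>\<^sup>2) \<in> O[at_right 0](\<lambda>\<delta>. \<delta> ^ 3)"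
proof -
  define avg where "avg g \<delta> = (\<integral>s. indicator (cball s\<^sub>0 \<delta>) s * g s \<partial>lborel) / measure lborel (cball s\<^sub>0 \<delta>)"
    for g :: "'b \<Rightarrow> real" and \<delta>
  define q where "q = 2 * (real DIM('b) + 2)"
  have "(\<lambda>\<delta>. avg (marg_S f) \<delta> - (marg_S f s\<^sub>0 + laplacian (marg_S f) s\<^sub>0 / q * \<delta>\<^sup>2)) \<in> O[at_right 0](\<lambda>\<delta>. \<delta> ^ 3)"
    and "(\<lambda>\<delta>. avg (phi f h) \<delta> - (phi f h s\<^sub>0 + laplacian (phi f h) s\<^sub>0 / q * \<delta>\<^sup>2)) \<in> O[at_right 0](\<lambda>\<delta>. \<delta> ^ 3)"
    unfolding avg_def q_def using ball_average_expansion C3 by blast+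
  note expansions = this
  have marg_avg_pos: "eventually (\<lambda>\<delta>. 0 < \<delta> \<and> 0 < avg (marg_S f) \<delta>) (at_right 0)"
    using eventually_at_right_less[of "0::real"]
      order_tendstoD(1)[OF tendsto_of_quadratic_expansion[OF expansions(1)] pos]
    by eventually_elim auto
  have ratio: "eventually (\<lambda>\<delta>. avg (phi f h) \<delta> / avg (marg_S f) \<delta> = abc_expect f h s\<^sub>0 \<delta> n) (at_right 0)"
    using marg_avg_pos
  proof eventually_elim
    case (elim \<delta>)
    then have "0 < measure lborel (cball s\<^sub>0 \<delta>)" by (simp add: content_cball)
    with elim have "0 < (\<integral>s. indicator (cball s\<^sub>0 \<delta>) s * marg_S f s \<partial>lborel)"
      by (simp add: avg_def zero_less_divide_iff)
    with \<open>0 < measure lborel (cball s\<^sub>0 \<delta>)\<close> show ?case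
      by (simp add: abc_expect_eq_ratio[OF h_meas h_int n] avg_def)
  qed
  have coefficient: "(laplacian (phi f h) s\<^sub>0 / q - phi f h s\<^sub>0 / marg_S f s\<^sub>0 * (laplacian (marg_S f) s\<^sub>0 / q))
        / marg_S f s\<^sub>0
      = (laplacian (phi f h) s\<^sub>0 - post_mean f h s\<^sub>0 * laplacian (marg_S f) s\<^sub>0) / (2 * (real DIM('b) + 2) * marg_S f s\<^sub>0)"
  proof -
    have "q > 0" by (simp add: q_def)
    then show ?thesis
      unfolding q_def[symmetric] using pos by (simp add: post_mean_eq_phi_div field_simps)
  qed
  from ratio have "eventually (\<lambda>\<delta>. avg (phi f h) \<delta> / avg (marg_S f) \<delta> - phi f h s\<^sub>0 / marg_S f s\<^sub>0
      - (laplacian (phi f h) s\<^sub>0 / q - phi f h s\<^sub>0 / marg_S f s\<^sub>0 * (laplacian (marg_S f) s\<^sub>0 / q)) / marg_S f s\<^sub>0 * \<delta>\<^sup>2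
      = abc_bias f h s\<^sub>0 \<delta> n - (laplacian (phi f h) s\<^sub>0 - post_mean f h s\<^sub>0 * laplacian (marg_S f) s\<^sub>0)
              / (2 * (real DIM('b) + 2) * marg_S f s\<^sub>0) * \<delta>\<^sup>2) (at_right 0)"
    by eventually_elim (subst coefficient[symmetric], simp add: abc_bias_def post_mean_eq_phi_div[OF pos])
  with quotient_expansion[OF expansions(2,1)] pos show ?thesis
    by (simp add: landau_o.big.in_cong)
qed

end

theorem lemma2:
  fixes f :: "'b::euclidean_space \<Rightarrow> 'a::euclidean_space \<Rightarrow> real"
    and h :: "'a \<Rightarrow> real" and n :: nat
  assumes f_meas: "(\<lambda>(s, t). f s t) \<in> borel_measurable borel"
    and f_nonneg: "\<And>s t. f s t \<ge> 0"
    and f_prob: "prob_space (joint f)"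
    and h_meas: "h \<in> borel_measurable borel"
    and h_int: "integrable (joint f) (\<lambda>(s, t). h t)"
    and n_pos: "n \<ge> 1"
  shows "AE s\<^sub>0 in density lborel (\<lambda>s. ennreal (marg_S f s)).
           C3_near (marg_S f) s\<^sub>0 \<and> C3_near (phi f h) s\<^sub>0 \<longrightarrow>
           (\<lambda>\<delta>. abc_bias f h s\<^sub>0 \<delta> n
                - (laplacian (phi f h) s\<^sub>0 - post_mean f h s\<^sub>0 * laplacian (marg_S f) s\<^sub>0)
                  / (2 * (real DIM('b) + 2) * marg_S f s\<^sub>0) * \<delta>\<^sup>2)
             \<in> O[at_right 0](\<lambda>\<delta>. \<delta> ^ 3)"
proof -
  interpret joint_density f
    by (rule joint_density.intro[OF f_meas f_nonneg f_prob])
  have "AE s\<^sub>0 in density lborel (\<lambda>s. ennreal (marg_S f s)). 0 < marg_S f s\<^sub>0"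
    using borel_measurable_marg_S by (subst AE_density) auto
  then show ?thesis
    by eventually_elim (use abc_bias_expansion[OF h_meas h_int n_pos] in blast)
qed

end
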